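(* Let $K$ be a Noetherian $\Sigma$-pseudofield such that $C:=K^\sigma$ is a $\Sigma_1$-closed pseudofield, let $A\in\mathrm{GL}_n(K)$, let $L$ be a Picard–Vessiot pseudofield for $\sigma Y=AY$ over $K$ with fundamental matrix $F$, and let $G=\mathrm{Aut}_\Sigma(L/K)\subseteq\mathrm{GL}_n(C)$ be its Galois group. If $H$ is a closed subgroup of $G$ with $L^H=K$, then $H=G$.
   Context: All rings are commutative with $1$. Fix $\Sigma_0=\mathbb Z$ with generator $\sigma$, a finite abelian group $\Sigma_1=\mathbb Z/t_1\mathbb Z\oplus\dots\oplus\mathbb Z/t_s\mathbb Z$ ($t_i\ge2$), and $\Sigma=\Sigma_0\oplus\Sigma_1$. For a subgroup $\Sigma'\subseteq\Sigma$, a $\Sigma'$-ring is a ring with an action of $\Sigma'$ by ring automorphisms; $\Sigma'$-ideals are $\Sigma'$-stable ideals; $K^\sigma$ is the ring of $\sigma$-invariants. A $\Sigma'$-ring is $\Sigma'$-simple if its only $\Sigma'$-ideals are $0$ and itself ($\neq0$). A ring is absolutely flat if every module over it is flat. A $\Sigma'$-pseudofield is an absolutely flat $\Sigma'$-simple ring; Noetherian if it is a Noetherian ring. A $\Sigma_1$-pseudofield $C$ is $\Sigma_1$-closed if $\sqrt I=\mathbb I(\mathbb V(I))$ for every $m$ and every $\Sigma_1$-ideal $I$ of $C\{y_1,\dots,y_m\}_{\Sigma_1}$ (polynomial ring in indeterminates $\tau y_i$, $\tau\in\Sigma_1$), with $\mathbb V$ the common zero set and $\mathbb I$ the ideal of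 vanishing polynomials. A Picard–Vessiot pseudofield for $\sigma Y=AY$ is a Noetherian $\Sigma$-pseudofield $L$ containing $K$ as a $\Sigma$-subring such that there is $F\in\mathrm{GL}_n(L)$ with $\sigma(F)=AF$, $L^\sigma=K^\sigma$, and $L$ is generated over $K$ by the entries of $F$. $\mathrm{Aut}_\Sigma(L/K)$ is the group of $\Sigma$-automorphisms of $L$ fixing $K$ pointwise, embedded in $\mathrm{GL}_n(C)$ by $\gamma\mapsto F^{-1}\gamma(F)$. A subgroup $H\subseteq G$ is closed if it is the set of $M\in G$ at which all elements of some set $E\subseteq C\{x_{ij},1/\det X\}_{\Sigma_1}$ vanish (with $\tau x_{ij}$ evaluated as $\tau(M_{ij})$). *)

theory Defs
  imports "HOL-Library.Poly_Mapping" "Jordan_Normal_Form.Determinant"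
begin

section \<open>The group Sigma_1 = Z/t_1 + ... + Z/t_s (elements: exponent vectors)\<close>

definition Sig1 :: "nat list \<Rightarrow> nat list set" where
  "Sig1 t = {v. length v = length t \<and> (\<forall>i<length t. v ! i < t ! i)}"

definition sadd :: "nat list \<Rightarrow> nat list \<Rightarrow> nat list \<Rightarrow> nat list" where
  "sadd t v w = map (\<lambda>i. (v ! i + w ! i) mod (t ! i)) [0..<length t]"

definition szero :: "nat list \<Rightarrow> nat list" where
  "szero t = replicate (length t) 0"

section \<open>Rings with Sigma-action (the big ring L is the whole type)\<close>

definition ring_aut :: "('a::comm_ring_1 \<Rightarrow> 'a) \<Rightarrow> bool" where
  "ring_aut f \<longleftrightarrow> bij f \<and> f 1 = 1 \<and> (\<forall>a b. f (a + b) = f a + f b \<and> f (a * b) = f a * f b)"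

text \<open>sig is the generator sigma of Sigma_0 = Z, act tau the action of tau in Sigma_1;
  together an action of Sigma = Sigma_0 + Sigma_1 by ring automorphisms.\<close>
definition sigma_action :: "nat list \<Rightarrow> ('a::comm_ring_1 \<Rightarrow> 'a) \<Rightarrow> (nat list \<Rightarrow> 'a \<Rightarrow> 'a) \<Rightarrow> bool" where
  "sigma_action t sig act \<longleftrightarrow> ring_aut sig \<and>
     (\<forall>\<tau>\<in>Sig1 t. ring_aut (act \<tau>) \<and> act \<tau> \<circ> sig = sig \<circ> act \<tau>) \<and>
     act (szero t) = id \<and>
     (\<forall>\<tau>\<in>Sig1 t. \<forall>\<rho>\<in>Sig1 t. act (sadd t \<tau> \<rho>) = act \<tau> \<circ> act \<rho>)"

definition subring :: "'a::comm_ring_1 set \<Rightarrow> bool" where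
  "subring R \<longleftrightarrow> 0 \<in> R \<and> 1 \<in> R \<and> (\<forall>a\<in>R. \<forall>b\<in>R. a + b \<in> R \<and> a * b \<in> R \<and> - a \<in> R)"

definition ideal_in :: "'a::comm_ring_1 set \<Rightarrow> 'a set \<Rightarrow> bool" where
  "ideal_in R I \<longleftrightarrow> I \<subseteq> R \<and> 0 \<in> I \<and> (\<forall>a\<in>I. \<forall>b\<in>I. a + b \<in> I) \<and>
     (\<forall>r\<in>R. \<forall>a\<in>I. r * a \<in> I)"

definition sig1_stable :: "nat list \<Rightarrow> (nat list \<Rightarrow> 'a \<Rightarrow> 'a) \<Rightarrow> 'a set \<Rightarrow> bool" where
  "sig1_stable t act I \<longleftrightarrow> (\<forall>\<tau>\<in>Sig1 t. act \<tau> ` I \<subseteq> I)"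

definition sig_stable :: "nat list \<Rightarrow> ('a \<Rightarrow> 'a) \<Rightarrow> (nat list \<Rightarrow> 'a \<Rightarrow> 'a) \<Rightarrow> 'a set \<Rightarrow> bool" where
  "sig_stable t sig act I \<longleftrightarrow> sig ` I = I \<and> sig1_stable t act I"

text \<open>Absolutely flat = von Neumann regular.\<close>
definition abs_flat :: "'a::comm_ring_1 set \<Rightarrow> bool" where
  "abs_flat R \<longleftrightarrow> (\<forall>a\<in>R. \<exists>x\<in>R. a = a * a * x)"

definition noetherian :: "'a::comm_ring_1 set \<Rightarrow> bool" where
  "noetherian R \<longleftrightarrow> (\<forall>f :: nat \<Rightarrow> 'a set. (\<forall>k. ideal_in R (f k)) \<and> (\<forall>k. f k \<subseteq> f (Suc k))
      \<longrightarrow> (\<exists>N. \<forall>k\<ge>N. f k = f N))"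

definition sigma_pseudofield :: "nat list \<Rightarrow> ('a::comm_ring_1 \<Rightarrow> 'a) \<Rightarrow> (nat list \<Rightarrow> 'a \<Rightarrow> 'a) \<Rightarrow> 'a set \<Rightarrow> bool" where
  "sigma_pseudofield t sig act R \<longleftrightarrow> subring R \<and> sig_stable t sig act R \<and> abs_flat R \<and>
     R \<noteq> {0} \<and> (\<forall>I. ideal_in R I \<and> sig_stable t sig act I \<longrightarrow> I = {0} \<or> I = R)"

definition sigma1_pseudofield :: "nat list \<Rightarrow> (nat list \<Rightarrow> 'a \<Rightarrow> 'a) \<Rightarrow> 'a::comm_ring_1 set \<Rightarrow> bool" where
  "sigma1_pseudofield t act R \<longleftrightarrow> subring R \<and> sig1_stable t act R \<and> abs_flat R \<and>
     R \<noteq> {0} \<and> (\<forall>I. ideal_in R I \<and> sig1_stable t act I \<longrightarrow> I = {0} \<or> I = R)"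

definition const_ring :: "('a \<Rightarrow> 'a) \<Rightarrow> 'a set \<Rightarrow> 'a set" where
  "const_ring sig R = {a \<in> R. sig a = a}"

section \<open>Sigma_1-polynomial rings: variables are pairs (v, tau), standing for tau v\<close>

type_synonym ('v, 'a) spoly = "(('v \<times> nat list) \<Rightarrow>\<^sub>0 nat) \<Rightarrow>\<^sub>0 'a"

text \<open>C{v : v in V}_Sigma1: coefficients in C, variables tau v with v in V, tau in Sigma_1.\<close>
definition spoly_ring :: "nat list \<Rightarrow> 'a::comm_ring_1 set \<Rightarrow> 'v set \<Rightarrow> ('v, 'a) spoly set" where
  "spoly_ring t C V = {p. \<forall>m\<in>Poly_Mapping.keys p. Poly_Mapping.lookup p m \<in> C \<and> (\<forall>x\<in>Poly_Mapping.keys m. fst x \<in> V \<and> snd x \<in> Sig1 t)}"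

definition peval :: "('v, 'a::comm_ring_1) spoly \<Rightarrow> ('v \<times> nat list \<Rightarrow> 'a) \<Rightarrow> 'a" where
  "peval p val = (\<Sum>m\<in>Poly_Mapping.keys p. Poly_Mapping.lookup p m * (\<Prod>x\<in>Poly_Mapping.keys m. val x ^ Poly_Mapping.lookup m x))"

definition mshift :: "nat list \<Rightarrow> nat list \<Rightarrow> (('v \<times> nat list) \<Rightarrow>\<^sub>0 nat) \<Rightarrow> (('v \<times> nat list) \<Rightarrow>\<^sub>0 nat)" where
  "mshift t \<tau> m = (\<Sum>x\<in>Poly_Mapping.keys m. Poly_Mapping.single (fst x, sadd t \<tau> (snd x)) (Poly_Mapping.lookup m x))"

definition pact :: "nat list \<Rightarrow> (nat list \<Rightarrow> 'a \<Rightarrow> 'a) \<Rightarrow> nat list \<Rightarrow> ('v, 'a::comm_ring_1) spoly \<Rightarrow> ('v, 'a) spoly" where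
  "pact t act \<tau> p = (\<Sum>m\<in>Poly_Mapping.keys p. Poly_Mapping.single (mshift t \<tau> m) (act \<tau> (Poly_Mapping.lookup p m)))"

definition radical_in :: "'b::comm_ring_1 set \<Rightarrow> 'b set \<Rightarrow> 'b set" where
  "radical_in R I = {p \<in> R. \<exists>k. p ^ k \<in> I}"

text \<open>Points of C^m are functions c with c i in C for i < m (and c i = 0 otherwise).\<close>
definition zero_set :: "nat list \<Rightarrow> (nat list \<Rightarrow> 'a \<Rightarrow> 'a) \<Rightarrow> 'a::comm_ring_1 set \<Rightarrow> nat \<Rightarrow> (nat, 'a) spoly set \<Rightarrow> (nat \<Rightarrow> 'a) set" where
  "zero_set t act C m I = {c. (\<forall>i<m. c i \<in> C) \<and> (\<forall>i\<ge>m. c i = 0) \<and>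
      (\<forall>p\<in>I. peval p (\<lambda>(i, \<tau>). act \<tau> (c i)) = 0)}"

definition vanishing_ideal :: "nat list \<Rightarrow> (nat list \<Rightarrow> 'a \<Rightarrow> 'a) \<Rightarrow> 'a::comm_ring_1 set \<Rightarrow> nat \<Rightarrow> (nat \<Rightarrow> 'a) set \<Rightarrow> (nat, 'a) spoly set" where
  "vanishing_ideal t act C m S = {p \<in> spoly_ring t C {..<m}. \<forall>c\<in>S. peval p (\<lambda>(i, \<tau>). act \<tau> (c i)) = 0}"

definition sigma1_closed :: "nat list \<Rightarrow> (nat list \<Rightarrow> 'a \<Rightarrow> 'a) \<Rightarrow> 'a::comm_ring_1 set \<Rightarrow> bool" where
  "sigma1_closed t act C \<longleftrightarrow> sigma1_pseudofield t act C \<and>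
     (\<forall>m. \<forall>I. ideal_in (spoly_ring t C {..<m}) I \<and> (\<forall>\<tau>\<in>Sig1 t. pact t act \<tau> ` I \<subseteq> I) \<longrightarrow>
        radical_in (spoly_ring t C {..<m}) I = vanishing_ideal t act C m (zero_set t act C m I))"

definition GL_in :: "'a::comm_ring_1 set \<Rightarrow> nat \<Rightarrow> 'a mat \<Rightarrow> bool" where
  "GL_in R n M \<longleftrightarrow> M \<in> carrier_mat n n \<and> (\<forall>i<n. \<forall>j<n. M $$ (i, j) \<in> R) \<and> (\<exists>u\<in>R. det M * u = 1)"

definition pf_generated :: "nat list \<Rightarrow> ('a::comm_ring_1 \<Rightarrow> 'a) \<Rightarrow> (nat list \<Rightarrow> 'a \<Rightarrow> 'a) \<Rightarrow> 'a set \<Rightarrow> nat \<Rightarrow> 'a mat \<Rightarrow> bool" where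
  "pf_generated t sig act K n F \<longleftrightarrow> (\<forall>R. subring R \<and> K \<subseteq> R \<and> (\<forall>i<n. \<forall>j<n. F $$ (i, j) \<in> R) \<and>
      sig_stable t sig act R \<and> abs_flat R \<longrightarrow> R = UNIV)"

definition PV_pseudofield :: "nat list \<Rightarrow> ('a::comm_ring_1 \<Rightarrow> 'a) \<Rightarrow> (nat list \<Rightarrow> 'a \<Rightarrow> 'a) \<Rightarrow> 'a set \<Rightarrow> nat \<Rightarrow> 'a mat \<Rightarrow> 'a mat \<Rightarrow> bool" where
  "PV_pseudofield t sig act K n A F \<longleftrightarrow>
     sigma_pseudofield t sig act UNIV \<and> noetherian (UNIV :: 'a set) \<and>
     subring K \<and> sig_stable t sig act K \<and>
     GL_in UNIV n F \<and> map_mat sig F = A * F \<and>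
     const_ring sig UNIV = const_ring sig K \<and>
     pf_generated t sig act K n F"

definition aut_group :: "nat list \<Rightarrow> ('a::comm_ring_1 \<Rightarrow> 'a) \<Rightarrow> (nat list \<Rightarrow> 'a \<Rightarrow> 'a) \<Rightarrow> 'a set \<Rightarrow> ('a \<Rightarrow> 'a) set" where
  "aut_group t sig act K = {\<gamma>. ring_aut \<gamma> \<and> \<gamma> \<circ> sig = sig \<circ> \<gamma> \<and>
      (\<forall>\<tau>\<in>Sig1 t. \<gamma> \<circ> act \<tau> = act \<tau> \<circ> \<gamma>) \<and> (\<forall>a\<in>K. \<gamma> a = a)}"

text \<open>gamma is sent to F^{-1} gamma(F).\<close>
definition gal_emb :: "nat \<Rightarrow> 'a::comm_ring_1 mat \<Rightarrow> ('a \<Rightarrow> 'a) \<Rightarrow> 'a mat" where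
  "gal_emb n F \<gamma> = (THE M. M \<in> carrier_mat n n \<and> F * M = map_mat \<gamma> F)"

definition galois_group :: "nat list \<Rightarrow> ('a::comm_ring_1 \<Rightarrow> 'a) \<Rightarrow> (nat list \<Rightarrow> 'a \<Rightarrow> 'a) \<Rightarrow> 'a set \<Rightarrow> nat \<Rightarrow> 'a mat \<Rightarrow> 'a mat set" where
  "galois_group t sig act K n F = gal_emb n F ` aut_group t sig act K"

definition fixed_ring :: "nat list \<Rightarrow> ('a::comm_ring_1 \<Rightarrow> 'a) \<Rightarrow> (nat list \<Rightarrow> 'a \<Rightarrow> 'a) \<Rightarrow> 'a set \<Rightarrow> nat \<Rightarrow> 'a mat \<Rightarrow> 'a mat set \<Rightarrow> 'a set" where
  "fixed_ring t sig act K n F H = {a. \<forall>\<gamma>\<in>aut_group t sig act K. gal_emb n F \<gamma> \<in> H \<longrightarrow> \<gamma> a = a}"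

definition ring_inverse :: "'a::comm_ring_1 \<Rightarrow> 'a" where
  "ring_inverse a = (THE b. a * b = 1)"

text \<open>Elements of C{x_ij, 1/det X}_Sigma1 are represented as fractions (p, k) meaning
  p / D^k with D = prod over tau in Sigma_1 of tau(det X), p in C{x_ij}_Sigma1.\<close>
definition coord_ring :: "nat list \<Rightarrow> 'a::comm_ring_1 set \<Rightarrow> nat \<Rightarrow> ((nat \<times> nat, 'a) spoly \<times> nat) set" where
  "coord_ring t C n = spoly_ring t C ({..<n} \<times> {..<n}) \<times> UNIV"

definition coord_eval :: "nat list \<Rightarrow> (nat list \<Rightarrow> 'a \<Rightarrow> 'a) \<Rightarrow> (nat \<times> nat, 'a::comm_ring_1) spoly \<times> nat \<Rightarrow> 'a mat \<Rightarrow> 'a" where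
  "coord_eval t act e M = peval (fst e) (\<lambda>(ij, \<tau>). act \<tau> (M $$ ij)) *
      ring_inverse (\<Prod>\<tau>\<in>Sig1 t. act \<tau> (det M)) ^ snd e"

definition closed_subgroup :: "nat list \<Rightarrow> (nat list \<Rightarrow> 'a \<Rightarrow> 'a) \<Rightarrow> 'a::comm_ring_1 set \<Rightarrow> nat \<Rightarrow> 'a mat set \<Rightarrow> 'a mat set \<Rightarrow> bool" where
  "closed_subgroup t act C n H G \<longleftrightarrow> H \<subseteq> G \<and> 1\<^sub>m n \<in> H \<and>
     (\<forall>M\<in>H. \<forall>N\<in>H. M * N \<in> H) \<and> (\<forall>M\<in>H. \<exists>N\<in>H. M * N = 1\<^sub>m n) \<and>
     (\<exists>E \<subseteq> coord_ring t C n. H = {M \<in> G. \<forall>e\<in>E. coord_eval t act e M = 0})"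

end

theory Submission
  imports Defs
begin

text \<open>
  Let \<open>\<Gamma>\<close> be the set of automorphisms whose matrices lie in \<open>H\<close>. Since the matrix of \<open>\<gamma>\<close> is
  \<open>F\<^sup>-\<^sup>1 \<gamma>(F)\<close>, each defining equation of \<open>H\<close>, evaluated at the matrix of \<open>\<gamma>\<close>, becomes an
  \<open>L\<close>-linear combination \<open>\<Sum> c\<^sub>i \<gamma>(b\<^sub>i)\<close> of values of \<open>\<gamma>\<close>. Such a combination vanishing on
  \<open>\<Gamma>\<close> vanishes on every automorphism over \<open>K\<close>: the coefficient vectors annihilated by \<open>\<Gamma>\<close>
  form a \<open>\<Gamma>\<close>-stable \<open>L\<close>-submodule of \<open>L\<^sup>N\<close>, and as \<open>L\<^sup>\<Gamma> = K\<close> this submodule is spanned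
  by vectors with entries in \<open>K\<close> (Galois descent; it works over the Noetherian absolutely flat
  ring \<open>L\<close> because there every ideal is generated by an idempotent). Hence every element of the
  Galois group satisfies the equations of \<open>H\<close>.
\<close>

lemma ring_aut_comm_ring_hom: "ring_aut f \<Longrightarrow> comm_ring_hom f"
proof unfold_locales
  assume f: "ring_aut f"
  then show add: "f (x + y) = f x + f y" and "f (x * y) = f x * f y" and "f 1 = 1" for x y
    unfolding ring_aut_def by blast+
  from add[of 0 0] show "f 0 = 0" by simp
qed

lemma ring_aut_comm_ring_isom: "ring_aut f \<Longrightarrow> comm_ring_isom f"
proof -
  assume f: "ring_aut f"
  then interpret comm_ring_hom f by (rule ring_aut_comm_ring_hom)
  from f have "bij f" unfolding ring_aut_def by blast
  then show ?thesis
    by unfold_locales (auto simp: bij_def intro: injD[of f _ 0])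
qed

lemma ring_aut_inv: "ring_aut f \<Longrightarrow> ring_aut (inv_into UNIV f)"
proof -
  assume "ring_aut f"
  then interpret comm_ring_isom f by (rule ring_aut_comm_ring_isom)
  show ?thesis
    unfolding ring_aut_def using inv.bij by (simp add: inv.hom_add inv.hom_mult)
qed

lemma ring_aut_comp: "ring_aut f \<Longrightarrow> ring_aut g \<Longrightarrow> ring_aut (f \<circ> g)"
  unfolding ring_aut_def using bij_comp by auto

lemma ring_aut_id: "ring_aut id"
  unfolding ring_aut_def by auto

lemma id_in_aut_group: "id \<in> aut_group t sig act K"
  unfolding aut_group_def using ring_aut_id by auto

lemma aut_group_comp:
  "g \<in> aut_group t sig act K \<Longrightarrow> h \<in> aut_group t sig act K \<Longrightarrow> g \<circ> h \<in> aut_group t sig act K"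
  unfolding aut_group_def using ring_aut_comp by (auto simp: fun_eq_iff)

lemma inv_into_commute:
  assumes g: "bij g" and comm: "g \<circ> f = f \<circ> g"
  shows "inv_into UNIV g \<circ> f = f \<circ> inv_into UNIV g"
proof
  fix x
  have "g (f (inv_into UNIV g x)) = f (g (inv_into UNIV g x))" using fun_cong[OF comm] by simp
  also have "\<dots> = f x" using surj_f_inv_f[OF bij_is_surj[OF g]] by simp
  finally have "inv_into UNIV g (f x) = inv_into UNIV g (g (f (inv_into UNIV g x)))" by simp
  then show "(inv_into UNIV g \<circ> f) x = (f \<circ> inv_into UNIV g) x"
    using inv_f_f[OF bij_is_inj[OF g]] by simp
qed

lemma aut_group_inv:
  assumes g: "g \<in> aut_group t sig act K"
  shows "inv_into UNIV g \<in> aut_group t sig act K"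
proof -
  have bij: "bij g" using g unfolding aut_group_def ring_aut_def by blast
  have "inv_into UNIV g a = a" if "a \<in> K" for a
  proof -
    have "g a = a" using g that unfolding aut_group_def by blast
    then show ?thesis using inv_f_f[OF bij_is_inj[OF bij], of a] by simp
  qed
  moreover have "ring_aut (inv_into UNIV g)" using g ring_aut_inv unfolding aut_group_def by blast
  moreover have "inv_into UNIV g \<circ> sig = sig \<circ> inv_into UNIV g"
    using g inv_into_commute[OF bij] unfolding aut_group_def by blast
  moreover have "inv_into UNIV g \<circ> act \<tau> = act \<tau> \<circ> inv_into UNIV g" if "\<tau> \<in> Sig1 t" for \<tau>
    using g that inv_into_commute[OF bij] unfolding aut_group_def by blast
  ultimately show ?thesis unfolding aut_group_def by blast
qed

section \<open>Idempotent generators of ideals\<close>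

lemma principal_ideal: "ideal_in UNIV (range ((*) (e :: 'a::comm_ring_1)))"
  unfolding ideal_in_def
  by (auto simp: image_iff) (metis mult_zero_right, metis distrib_left, metis mult.left_commute)

lemma ideal_in_diff:
  assumes "ideal_in UNIV J" "a \<in> J" "b \<in> J"
  shows "a - b \<in> J"
proof -
  have "(- 1) * b \<in> J" using assms unfolding ideal_in_def by blast
  with assms show ?thesis unfolding ideal_in_def by (metis diff_conv_add_uminus mult_minus1)
qed

lemma ideal_in_mult_right: "ideal_in UNIV J \<Longrightarrow> a \<in> J \<Longrightarrow> a * r \<in> J"
  unfolding ideal_in_def by (metis UNIV_I mult.commute)

lemma idempotent_enlarge:
  fixes g :: "'a::comm_ring_1"
  assumes flat: "abs_flat (UNIV :: 'a set)" and J: "ideal_in UNIV J"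
    and g: "g \<in> J" "g * g = g" and j: "j \<in> J" "j * g \<noteq> j"
  shows "\<exists>g'\<in>J. g' * g' = g' \<and> g' * g = g \<and> g' \<notin> range ((*) g)"
proof -
  define a where "a = j - j * g"
  have aJ: "a \<in> J" using ideal_in_diff[OF J j(1) ideal_in_mult_right[OF J j(1)]] by (simp add: a_def)
  have "a \<noteq> 0" using j(2) by (simp add: a_def)
  have ag: "a * g = 0" using g(2) by (simp add: a_def left_diff_distrib mult.assoc)
  obtain x where x: "a = a * a * x" using flat unfolding abs_flat_def by blast
  define h where "h = a * x"
  have hJ: "h \<in> J" using ideal_in_mult_right[OF J aJ] by (simp add: h_def)
  have ah: "a * h = a" using x by (simp add: h_def mult.assoc)
  have hh: "h * h = h" using ah by (metis h_def mult.assoc mult.commute)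
  have hg: "h * g = 0" using ag by (metis h_def mult.commute mult.left_commute mult_zero_left)
  have "g + h \<notin> range ((*) g)"
  proof
    assume "g + h \<in> range ((*) g)"
    then obtain y where "g + h = g * y" by blast
    then have "a = a * g * y" using ag ah by (metis add_0 distrib_left mult.assoc)
    with ag \<open>a \<noteq> 0\<close> show False by simp
  qed
  moreover have "g + h \<in> J" using J g(1) hJ unfolding ideal_in_def by blast
  moreover have "(g + h) * (g + h) = g + h" and "(g + h) * g = g"
    using g(2) hh hg by (simp_all add: algebra_simps)
  ultimately show ?thesis by blast
qed

lemma noetherian_idempotent_chain:
  fixes f :: "nat \<Rightarrow> 'a::comm_ring_1"
  assumes "noetherian (UNIV :: 'a set)" and "\<And>k. f (Suc k) * f k = f k"
  shows "\<exists>N. f (Suc N) \<in> range ((*) (f N))"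
proof -
  have "range ((*) (f k)) \<subseteq> range ((*) (f (Suc k)))" for k
  proof
    fix a assume "a \<in> range ((*) (f k))"
    then obtain y where "a = f k * y" by blast
    then have "a = f (Suc k) * (f k * y)" using assms(2)[of k] by (simp flip: mult.assoc)
    then show "a \<in> range ((*) (f (Suc k)))" by blast
  qed
  with assms(1) principal_ideal obtain N where N: "\<forall>k\<ge>N. range ((*) (f k)) = range ((*) (f N))"
    unfolding noetherian_def by (elim allE[of _ "\<lambda>k. range ((*) (f k))"]) blast
  have "f (Suc N) \<in> range ((*) (f (Suc N)))" by (metis mult_1_right rangeI)
  with N[rule_format, of "Suc N"] show ?thesis by auto
qed

lemma ideal_idempotent_generator:
  fixes J :: "'a::comm_ring_1 set"
  assumes flat: "abs_flat (UNIV :: 'a set)" and noeth: "noetherian (UNIV :: 'a set)"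
    and J: "ideal_in UNIV J"
  shows "\<exists>e\<in>J. e * e = e \<and> (\<forall>j\<in>J. j * e = j)"
proof (rule ccontr)
  assume none: "\<not> ?thesis"
  have "\<forall>g\<in>{g \<in> J. g * g = g}. \<exists>g'. g' \<in> J \<and> g' * g' = g' \<and> g' * g = g \<and> g' \<notin> range ((*) g)"
  proof
    fix g assume "g \<in> {g \<in> J. g * g = g}"
    then have g: "g \<in> J" "g * g = g" by simp_all
    with none obtain j where "j \<in> J" "j * g \<noteq> j" by blast
    from idempotent_enlarge[OF flat J g this]
    show "\<exists>g'. g' \<in> J \<and> g' * g' = g' \<and> g' * g = g \<and> g' \<notin> range ((*) g)" by blast
  qed
  then obtain step where step: "\<forall>g\<in>{g \<in> J. g * g = g}.
      step g \<in> J \<and> step g * step g = step g \<and> step g * g = g \<and> step g \<notin> range ((*) g)"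
    by (rule bchoice[THEN exE])
  define f where "f k = (step ^^ k) 0" for k
  have f_Suc: "f (Suc k) = step (f k)" for k by (simp add: f_def)
  have f: "f k \<in> J \<and> f k * f k = f k" for k
  proof (induction k)
    case 0
    show ?case using J by (simp add: f_def ideal_in_def)
  next
    case (Suc k)
    then show ?case using step by (simp add: f_Suc)
  qed
  then have "f (Suc k) * f k = f k" for k using step by (simp add: f_Suc)
  then obtain N where "f (Suc N) \<in> range ((*) (f N))"
    using noetherian_idempotent_chain[OF noeth] by blast
  with step f show False by (simp add: f_Suc)
qed

section \<open>Galois descent for stable submodules\<close>

definition stable_submodule :: "('a::comm_ring_1 \<Rightarrow> 'a) set \<Rightarrow> nat \<Rightarrow> (nat \<Rightarrow> 'a) set \<Rightarrow> bool" where
  "stable_submodule G N W \<longleftrightarrow> (\<forall>c\<in>W. \<forall>i\<ge>N. c i = 0) \<and> (\<lambda>_. 0) \<in> W \<and>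
     (\<forall>c\<in>W. \<forall>d\<in>W. (\<lambda>i. c i + d i) \<in> W) \<and> (\<forall>a. \<forall>c\<in>W. (\<lambda>i. a * c i) \<in> W) \<and>
     (\<forall>g\<in>G. \<forall>c\<in>W. (\<lambda>i. g (c i)) \<in> W)"

definition mat_apply :: "nat \<Rightarrow> (nat \<Rightarrow> nat \<Rightarrow> 'a::comm_ring_1) \<Rightarrow> (nat \<Rightarrow> 'a) \<Rightarrow> nat \<Rightarrow> 'a" where
  "mat_apply N p c i = (\<Sum>j<N. p i j * c j)"

text \<open>A projector over \<open>K\<close> onto \<open>W\<close> witnesses that \<open>W\<close> is spanned by vectors with entries in \<open>K\<close>.\<close>
definition projector_over :: "'a::comm_ring_1 set \<Rightarrow> nat \<Rightarrow> (nat \<Rightarrow> 'a) set \<Rightarrow> (nat \<Rightarrow> nat \<Rightarrow> 'a) \<Rightarrow> bool" where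
  "projector_over K N W p \<longleftrightarrow> (\<forall>i j. p i j \<in> K) \<and> (\<forall>j. (\<lambda>i. p i j) \<in> W) \<and>
     (\<forall>c\<in>W. mat_apply N p c = c)"

lemma stable_submoduleD:
  assumes "stable_submodule G N W"
  shows "c \<in> W \<Longrightarrow> N \<le> i \<Longrightarrow> c i = 0" and "(\<lambda>_. 0) \<in> W"
    and "c \<in> W \<Longrightarrow> d \<in> W \<Longrightarrow> (\<lambda>i. c i + d i) \<in> W"
    and "c \<in> W \<Longrightarrow> (\<lambda>i. a * c i) \<in> W"
    and "g \<in> G \<Longrightarrow> c \<in> W \<Longrightarrow> (\<lambda>i. g (c i)) \<in> W"
  using assms unfolding stable_submodule_def by blast+

lemma stable_submodule_diff:
  assumes "stable_submodule G N W" "c \<in> W" "d \<in> W"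
  shows "(\<lambda>i. c i - d i) \<in> W"
  using stable_submoduleD(3)[OF assms(1,2) stable_submoduleD(4)[OF assms(1,3), of "- 1"]] by simp

lemma stable_submodule_mat_apply:
  assumes W: "stable_submodule G N W" and cols: "\<And>j. (\<lambda>i. p i j) \<in> W"
  shows "mat_apply M p c \<in> W"
proof -
  have "(\<lambda>i. \<Sum>j<k. c j * p i j) \<in> W" for k
    by (induction k) (auto simp: stable_submoduleD[OF W] cols)
  moreover have "mat_apply M p c = (\<lambda>i. \<Sum>j<M. c j * p i j)"
    by (simp add: mat_apply_def mult.commute fun_eq_iff)
  ultimately show ?thesis by simp
qed

lemma mat_apply_diff: "mat_apply N p (\<lambda>j. c j - d j) i = mat_apply N p c i - mat_apply N p d i"
  by (simp add: mat_apply_def sum_subtractf right_diff_distrib)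

lemma mat_apply_scale: "mat_apply N p (\<lambda>j. a * d j) i = a * mat_apply N p d i"
  by (simp add: mat_apply_def sum_distrib_left mult.left_commute)

lemma ring_aut_mat_apply:
  assumes "ring_aut g" and "\<And>i j. g (p i j) = p i j"
  shows "g (mat_apply N p c i) = mat_apply N p (\<lambda>j. g (c j)) i"
proof -
  interpret comm_ring_hom g using assms(1) by (rule ring_aut_comm_ring_hom)
  show ?thesis by (simp add: mat_apply_def hom_distribs assms(2))
qed

lemma ideal_last_coordinates:
  assumes W: "stable_submodule G N W"
  shows "ideal_in UNIV ((\<lambda>c. c k) ` W)"
proof -
  have "0 \<in> (\<lambda>c. c k) ` W" using image_eqI[OF _ stable_submoduleD(2)[OF W], of 0 "\<lambda>c. c k"] by simp
  moreover have "c k + d k \<in> (\<lambda>c. c k) ` W" if "c \<in> W" "d \<in> W" for c d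
    using stable_submoduleD(3)[OF W that] by force
  moreover have "r * c k \<in> (\<lambda>c. c k) ` W" if "c \<in> W" for c r
    using stable_submoduleD(4)[OF W that] by force
  ultimately show ?thesis unfolding ideal_in_def by auto
qed

lemma stable_submodule_last_zero:
  assumes W: "stable_submodule G (Suc N) W" and G: "\<And>g. g \<in> G \<Longrightarrow> ring_aut g"
  shows "stable_submodule G N {c \<in> W. c N = 0}"
proof -
  have "g 0 = 0" if "g \<in> G" for g
  proof -
    interpret comm_ring_hom g using G[OF that] by (rule ring_aut_comm_ring_hom)
    show ?thesis by simp
  qed
  moreover have "c i = 0" if "c \<in> W" "c N = 0" "N \<le> i" for c i
    using stable_submoduleD(1)[OF W \<open>c \<in> W\<close>, of i] that by (cases "i = N") auto
  ultimately show ?thesis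
    using stable_submoduleD[OF W] unfolding stable_submodule_def by auto
qed

lemma idempotent_generator_fixed:
  assumes g: "ring_aut g" and J: "g ` J \<subseteq> J" "inv_into UNIV g ` J \<subseteq> J"
    and e: "e \<in> J" "\<forall>j\<in>J. j * e = j"
  shows "g e = e"
proof -
  interpret comm_ring_isom g using g by (rule ring_aut_comm_ring_isom)
  have "g e * e = g e" using J(1) e by blast
  moreover have "inv_into UNIV g e * e = inv_into UNIV g e" using J(2) e by blast
  then have "e * g e = e" by (metis hom_mult f_inv_f)
  ultimately show ?thesis by (simp add: mult.commute)
qed

lemma stable_submodule_fixed_lift:
  assumes W: "stable_submodule G (Suc N) W" and G: "\<And>g. g \<in> G \<Longrightarrow> ring_aut g"
    and p: "projector_over K N {c \<in> W. c N = 0} p" and K: "\<forall>g\<in>G. \<forall>a\<in>K. g a = a"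
    and v: "v \<in> W" and v_fixed: "\<forall>g\<in>G. g (v N) = v N"
  defines "u \<equiv> \<lambda>i. v i - mat_apply N p v i"
  shows "u \<in> W" and "u N = v N" and "\<And>g i. g \<in> G \<Longrightarrow> g (u i) = u i"
    and "\<And>i. mat_apply N p u i = 0"
proof -
  have p_cols: "\<And>j. (\<lambda>i. p i j) \<in> W" and p_cols_N: "\<And>j. p N j = 0"
    and p_fix: "\<And>c. c \<in> W \<Longrightarrow> c N = 0 \<Longrightarrow> mat_apply N p c = c"
    using p unfolding projector_over_def by auto
  have Pv: "mat_apply N p v \<in> W" "mat_apply N p v N = 0"
    using stable_submodule_mat_apply[OF W p_cols] p_cols_N by (auto simp: mat_apply_def)
  show "u \<in> W" unfolding u_def by (rule stable_submodule_diff[OF W v Pv(1)])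
  show "u N = v N" using Pv(2) by (simp add: u_def)
  show "mat_apply N p u i = 0" for i
    using p_fix[OF Pv] by (simp add: u_def mat_apply_diff)
  fix g i assume g: "g \<in> G"
  interpret comm_ring_hom g using G[OF g] by (rule ring_aut_comm_ring_hom)
  define d where "d = (\<lambda>i. g (v i) - v i)"
  have "d \<in> W" unfolding d_def using stable_submodule_diff[OF W stable_submoduleD(5)[OF W g v] v] .
  moreover have "d N = 0" using v_fixed g by (simp add: d_def)
  ultimately have "mat_apply N p d i = d i" using p_fix by simp
  then have "mat_apply N p (\<lambda>j. g (v j)) i = g (v i) - v i + mat_apply N p v i"
    by (simp add: d_def mat_apply_diff diff_eq_eq)
  moreover have "g (mat_apply N p v i) = mat_apply N p (\<lambda>j. g (v j)) i"
    using ring_aut_mat_apply[OF G[OF g]] K g p unfolding projector_over_def by blast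
  ultimately show "g (u i) = u i" by (simp add: u_def hom_distribs)
qed

lemma projector_extend:
  assumes W: "stable_submodule G (Suc N) W" and p: "projector_over K N {c \<in> W. c N = 0} p"
    and u: "u \<in> W" "\<And>i. u i \<in> K" "\<And>i. mat_apply N p u i = 0" and "0 \<in> K"
    and u_N: "\<forall>c\<in>W. c N * u N = c N"
  shows "projector_over K (Suc N) W (\<lambda>i j. if j < N then p i j else if j = N then u i else 0)"
    (is "projector_over K (Suc N) W ?p")
proof -
  have p_cols: "\<And>j. (\<lambda>i. p i j) \<in> W"
    and p_fix: "\<And>c. c \<in> W \<Longrightarrow> c N = 0 \<Longrightarrow> mat_apply N p c = c"
    using p unfolding projector_over_def by auto
  have "mat_apply (Suc N) ?p c i = c i" if c: "c \<in> W" for c i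
  proof -
    define w where "w = (\<lambda>i. c i - c N * u i)"
    have "w \<in> W"
      unfolding w_def by (rule stable_submodule_diff[OF W c stable_submoduleD(4)[OF W u(1)]])
    moreover have "w N = 0" using u_N c by (simp add: w_def)
    ultimately have "mat_apply N p w i = w i" using p_fix by simp
    then have "mat_apply N p c i = c i - c N * u i"
      using u(3) by (simp add: w_def mat_apply_diff mat_apply_scale)
    then show ?thesis by (simp add: mat_apply_def mult.commute)
  qed
  moreover have "(\<lambda>i. ?p i j) \<in> W" for j
    using p_cols u(1) stable_submoduleD(2)[OF W] by (cases "j < N"; cases "j = N") auto
  moreover have "?p i j \<in> K" for i j
    using p u(2) \<open>0 \<in> K\<close> unfolding projector_over_def by auto
  ultimately show ?thesis unfolding projector_over_def by auto
qed

text \<open>Induction on \<open>N\<close>: the last coordinates of \<open>W\<close> form a \<open>G\<close>-stable ideal, whose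
  idempotent generator is \<open>G\<close>-fixed and lifts to a \<open>G\<close>-fixed vector of \<open>W\<close>; together with a
  projector for the vectors of \<open>W\<close> with last coordinate \<open>0\<close> it gives a projector for \<open>W\<close>.\<close>
lemma stable_submodule_projector:
  fixes G :: "('a::comm_ring_1 \<Rightarrow> 'a) set"
  assumes flat: "abs_flat (UNIV :: 'a set)" and noeth: "noetherian (UNIV :: 'a set)"
    and G: "\<And>g. g \<in> G \<Longrightarrow> ring_aut g" and G_inv: "\<And>g. g \<in> G \<Longrightarrow> inv_into UNIV g \<in> G"
    and K: "\<And>a. (\<forall>g\<in>G. g a = a) \<longleftrightarrow> a \<in> K"
  shows "stable_submodule G N W \<Longrightarrow> \<exists>p. projector_over K N W p"
proof -
  have "g 0 = 0" if "g \<in> G" for g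
  proof -
    interpret comm_ring_hom g using G[OF that] by (rule ring_aut_comm_ring_hom)
    show ?thesis by simp
  qed
  with K have K0: "0 \<in> K" by blast
  have K_fixed: "\<forall>g\<in>G. \<forall>a\<in>K. g a = a" using K by blast
  show "stable_submodule G N W \<Longrightarrow> \<exists>p. projector_over K N W p"
  proof (induction N arbitrary: W)
    case 0
    then have "projector_over K 0 W (\<lambda>i j. 0)"
      using K0 stable_submoduleD[OF 0] unfolding projector_over_def by (auto simp: mat_apply_def fun_eq_iff)
    then show ?case by blast
  next
    case (Suc N)
    note W = Suc.prems
    obtain p where p: "projector_over K N {c \<in> W. c N = 0} p"
      using Suc.IH[OF stable_submodule_last_zero[OF W G]] by blast
    define J where "J = (\<lambda>c. c N) ` W"
    have J_stable: "g ` J \<subseteq> J" if "g \<in> G" for g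
      using stable_submoduleD(5)[OF W that] by (auto simp: J_def)
    obtain e where e: "e \<in> J" "\<forall>j\<in>J. j * e = j"
      using ideal_idempotent_generator[OF flat noeth ideal_last_coordinates[OF W, of N, folded J_def]]
      by blast
    have e_fixed: "g e = e" if "g \<in> G" for g
      using idempotent_generator_fixed[OF G[OF that] J_stable[OF that] J_stable[OF G_inv[OF that]] e] .
    obtain v where v: "v \<in> W" "v N = e" using e(1) unfolding J_def by blast
    have v_fixed: "\<forall>g\<in>G. g (v N) = v N" using e_fixed v(2) by simp
    define u where "u = (\<lambda>i. v i - mat_apply N p v i)"
    note lift = stable_submodule_fixed_lift[OF W G p K_fixed v(1) v_fixed, folded u_def]
    have u_K: "u i \<in> K" for i using lift(3) by (simp add: u_def flip: K)
    have u_N: "\<forall>c\<in>W. c N * u N = c N" using e(2) lift(2) v(2) unfolding J_def by (simp add: u_def)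
    show ?case using projector_extend[OF W p lift(1) u_K lift(4) K0 u_N] by blast
  qed
qed

section \<open>Linear combinations of automorphisms\<close>

definition lincomb_eval :: "('a::comm_ring_1 \<Rightarrow> 'a) \<Rightarrow> ('a \<times> 'a) list \<Rightarrow> 'a" where
  "lincomb_eval g xs = (\<Sum>(c, b)\<leftarrow>xs. c * g b)"

lemma lincomb_eval_conv_sum:
  "lincomb_eval g xs = (\<Sum>i<length xs. fst (xs ! i) * g (snd (xs ! i)))"
  unfolding lincomb_eval_def sum_list_sum_nth lessThan_atLeast0
  by (simp add: case_prod_beta)

lemma lincomb_eval_Nil [simp]: "lincomb_eval g [] = 0"
  by (simp add: lincomb_eval_def)

lemma lincomb_eval_Cons [simp]: "lincomb_eval g ((c, b) # xs) = c * g b + lincomb_eval g xs"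
  by (simp add: lincomb_eval_def)

lemma lincomb_eval_append: "lincomb_eval g (xs @ ys) = lincomb_eval g xs + lincomb_eval g ys"
  by (simp add: lincomb_eval_def)

lemma lincomb_eval_mult:
  assumes "comm_ring_hom g"
  shows "lincomb_eval g [(c * c', b * b'). (c, b) \<leftarrow> xs, (c', b') \<leftarrow> ys] =
    lincomb_eval g xs * lincomb_eval g ys"
proof -
  interpret comm_ring_hom g by (rule assms)
  have "lincomb_eval g (map (\<lambda>(c', b'). (c * c', b * b')) ys) = c * g b * lincomb_eval g ys" for c b
    by (induction ys) (auto simp: hom_mult algebra_simps)
  then show ?thesis
    by (induction xs) (auto simp: lincomb_eval_append algebra_simps)
qed

definition annihilator :: "('a::comm_ring_1 \<Rightarrow> 'a) set \<Rightarrow> nat \<Rightarrow> (nat \<Rightarrow> 'a) \<Rightarrow> (nat \<Rightarrow> 'a) set" where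
  "annihilator G N b = {c. (\<forall>i\<ge>N. c i = 0) \<and> (\<forall>h\<in>G. (\<Sum>i<N. c i * h (b i)) = 0)}"

lemma stable_submodule_annihilator:
  assumes G: "\<And>g. g \<in> G \<Longrightarrow> ring_aut g"
    and G_comp: "\<And>g h. g \<in> G \<Longrightarrow> h \<in> G \<Longrightarrow> g \<circ> h \<in> G"
    and G_inv: "\<And>g. g \<in> G \<Longrightarrow> inv_into UNIV g \<in> G"
  shows "stable_submodule G N (annihilator G N b)"
proof -
  have "(\<lambda>i. g (c i)) \<in> annihilator G N b" if g: "g \<in> G" and c: "c \<in> annihilator G N b" for g c
  proof -
    interpret comm_ring_isom g using G[OF g] by (rule ring_aut_comm_ring_isom)
    have "(\<Sum>i<N. g (c i) * h (b i)) = 0" if h: "h \<in> G" for h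
    proof -
      have "(\<Sum>i<N. c i * (inv_into UNIV g \<circ> h) (b i)) = 0"
        using c G_comp[OF G_inv[OF g] h] unfolding annihilator_def by blast
      then have "g (\<Sum>i<N. c i * (inv_into UNIV g \<circ> h) (b i)) = 0" by simp
      then show ?thesis by (simp add: hom_distribs)
    qed
    with c show ?thesis unfolding annihilator_def by simp
  qed
  then show ?thesis
    unfolding stable_submodule_def annihilator_def
    by (auto simp: distrib_right sum.distrib mult.assoc simp flip: sum_distrib_left)
qed

lemma lincomb_eval_vanishes:
  fixes G :: "('a::comm_ring_1 \<Rightarrow> 'a) set"
  assumes flat: "abs_flat (UNIV :: 'a set)" and noeth: "noetherian (UNIV :: 'a set)"
    and G: "\<And>g. g \<in> G \<Longrightarrow> ring_aut g" and "id \<in> G"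
    and G_comp: "\<And>g h. g \<in> G \<Longrightarrow> h \<in> G \<Longrightarrow> g \<circ> h \<in> G"
    and G_inv: "\<And>g. g \<in> G \<Longrightarrow> inv_into UNIV g \<in> G"
    and K: "\<And>a. (\<forall>g\<in>G. g a = a) \<longleftrightarrow> a \<in> K"
    and zero: "\<forall>h\<in>G. lincomb_eval h xs = 0"
    and f: "comm_ring_hom f" "\<forall>a\<in>K. f a = a"
  shows "lincomb_eval f xs = 0"
proof -
  interpret comm_ring_hom f by (rule f(1))
  define N where "N = length xs"
  define b where "b i = snd (xs ! i)" for i
  define c where "c i = (if i < N then fst (xs ! i) else 0)" for i
  have eval: "lincomb_eval g xs = (\<Sum>i<N. c i * g (b i))" for g
    by (simp add: lincomb_eval_conv_sum N_def b_def c_def)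
  let ?W = "annihilator G N b"
  obtain p where p: "projector_over K N ?W p"
    using stable_submodule_projector[OF flat noeth G G_inv K stable_submodule_annihilator[OF G G_comp G_inv]]
    by blast
  have "c \<in> ?W" using zero unfolding annihilator_def eval by (simp add: c_def)
  with p have "mat_apply N p c = c" unfolding projector_over_def by blast
  then have c_eq: "c i = (\<Sum>j<N. p i j * c j)" for i
    unfolding mat_apply_def by (simp add: fun_eq_iff)
  have "(\<Sum>i<N. p i j * id (b i)) = 0" for j
    using p \<open>id \<in> G\<close> unfolding projector_over_def annihilator_def by blast
  moreover have "f (\<Sum>i<N. p i j * b i) = (\<Sum>i<N. p i j * f (b i))" for j
    using p f(2) unfolding projector_over_def by (simp add: hom_distribs)
  ultimately have col: "(\<Sum>i<N. p i j * f (b i)) = 0" for j by simp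
  have "lincomb_eval f xs = (\<Sum>i<N. (\<Sum>j<N. p i j * c j) * f (b i))"
    unfolding eval by (subst c_eq) (rule refl)
  also have "\<dots> = (\<Sum>i<N. \<Sum>j<N. c j * (p i j * f (b i)))"
    by (simp add: sum_distrib_left sum_distrib_right mult.commute mult.left_commute)
  also have "\<dots> = (\<Sum>j<N. c j * (\<Sum>i<N. p i j * f (b i)))"
    by (subst sum.swap) (simp add: sum_distrib_left)
  also have "\<dots> = 0" by (simp add: col)
  finally show ?thesis .
qed

definition aut_lincomb :: "('a::comm_ring_1 \<Rightarrow> 'a) set \<Rightarrow> (('a \<Rightarrow> 'a) \<Rightarrow> 'a) \<Rightarrow> bool" where
  "aut_lincomb G f \<longleftrightarrow> (\<exists>xs. \<forall>g\<in>G. f g = lincomb_eval g xs)"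

lemma aut_lincomb_cong: "(\<And>g. g \<in> G \<Longrightarrow> f g = f' g) \<Longrightarrow> aut_lincomb G f' \<Longrightarrow> aut_lincomb G f"
  unfolding aut_lincomb_def by metis

lemma aut_lincomb_const:
  assumes "\<And>g. g \<in> G \<Longrightarrow> ring_aut g"
  shows "aut_lincomb G (\<lambda>g. a)"
  unfolding aut_lincomb_def
  by (rule exI[of _ "[(a, 1)]"]) (auto dest: assms simp: ring_aut_def)

lemma aut_lincomb_apply: "aut_lincomb G (\<lambda>g. g b)"
  unfolding aut_lincomb_def by (rule exI[of _ "[(1, b)]"]) simp

lemma aut_lincomb_add: "aut_lincomb G f \<Longrightarrow> aut_lincomb G f' \<Longrightarrow> aut_lincomb G (\<lambda>g. f g + f' g)"
  unfolding aut_lincomb_def by (metis lincomb_eval_append)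

lemma aut_lincomb_mult:
  assumes "\<And>g. g \<in> G \<Longrightarrow> ring_aut g"
  shows "aut_lincomb G f \<Longrightarrow> aut_lincomb G f' \<Longrightarrow> aut_lincomb G (\<lambda>g. f g * f' g)"
  unfolding aut_lincomb_def using lincomb_eval_mult assms ring_aut_comm_ring_hom by metis

lemma aut_lincomb_sum:
  "(\<And>s. s \<in> S \<Longrightarrow> aut_lincomb G (f s)) \<Longrightarrow> aut_lincomb G (\<lambda>g. \<Sum>s\<in>S. f s g)"
proof -
  have "aut_lincomb G (\<lambda>g. 0)" unfolding aut_lincomb_def by (auto intro: exI[of _ "[]"])
  then show "(\<And>s. s \<in> S \<Longrightarrow> aut_lincomb G (f s)) \<Longrightarrow> aut_lincomb G (\<lambda>g. \<Sum>s\<in>S. f s g)"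
    by (induction S rule: infinite_finite_induct) (simp_all add: aut_lincomb_add)
qed

lemma aut_lincomb_prod:
  assumes G: "\<And>g. g \<in> G \<Longrightarrow> ring_aut g"
  shows "(\<And>s. s \<in> S \<Longrightarrow> aut_lincomb G (f s)) \<Longrightarrow> aut_lincomb G (\<lambda>g. \<Prod>s\<in>S. f s g)"
  by (induction S rule: infinite_finite_induct) (simp_all add: aut_lincomb_const[OF G] aut_lincomb_mult[OF G])

lemma aut_lincomb_power:
  assumes G: "\<And>g. g \<in> G \<Longrightarrow> ring_aut g"
  shows "aut_lincomb G f \<Longrightarrow> aut_lincomb G (\<lambda>g. f g ^ k)"
  by (induction k) (simp_all add: aut_lincomb_const[OF G] aut_lincomb_mult[OF G])

lemma aut_lincomb_peval:
  assumes G: "\<And>g. g \<in> G \<Longrightarrow> ring_aut g"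
    and vars: "\<And>m x. m \<in> Poly_Mapping.keys p \<Longrightarrow> x \<in> Poly_Mapping.keys m \<Longrightarrow> aut_lincomb G (\<lambda>g. val g x)"
  shows "aut_lincomb G (\<lambda>g. peval p (val g))"
  unfolding peval_def
  by (intro aut_lincomb_sum aut_lincomb_mult[OF G] aut_lincomb_const[OF G] aut_lincomb_prod[OF G]
      aut_lincomb_power[OF G] vars)

lemma adj_mat_inverse:
  assumes M: "M \<in> carrier_mat n n" and u: "det M * u = 1"
  shows "(u \<cdot>\<^sub>m adj_mat M) * M = 1\<^sub>m n" and "M * (u \<cdot>\<^sub>m adj_mat M) = 1\<^sub>m n"
proof -
  have one: "u \<cdot>\<^sub>m (det M \<cdot>\<^sub>m 1\<^sub>m n) = 1\<^sub>m n"
    using u by (intro eq_matI) (auto simp: mult.commute)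
  show "(u \<cdot>\<^sub>m adj_mat M) * M = 1\<^sub>m n" and "M * (u \<cdot>\<^sub>m adj_mat M) = 1\<^sub>m n"
    using adj_mat[OF M] M one by (simp_all add: mult_smult_assoc_mat mult_smult_distrib)
qed

lemma mult_left_cancel_mat:
  fixes B :: "'a::semiring_1 mat"
  assumes B': "B' \<in> carrier_mat n n" "B' * B = 1\<^sub>m n" and B: "B \<in> carrier_mat n n"
    and X: "X \<in> carrier_mat n m" and Y: "Y \<in> carrier_mat n m" and eq: "B * X = B * Y"
  shows "X = Y"
proof -
  have "X = (B' * B) * X" using B'(2) left_mult_one_mat[OF X] by simp
  also have "\<dots> = B' * (B * Y)" using assoc_mult_mat[OF B'(1) B X] eq by simp
  also have "\<dots> = Y" using assoc_mult_mat[OF B'(1) B Y] B'(2) Y by simp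
  finally show ?thesis .
qed

lemma GL_in_invertible:
  assumes "GL_in R n M"
  shows "\<exists>M'. M' \<in> carrier_mat n n \<and> M' * M = 1\<^sub>m n \<and> M * M' = 1\<^sub>m n"
proof -
  from assms obtain u where M: "M \<in> carrier_mat n n" and u: "det M * u = 1" unfolding GL_in_def by blast
  show ?thesis
    using adj_mat_inverse[OF M u] adj_mat(1)[OF M] by (intro exI[of _ "u \<cdot>\<^sub>m adj_mat M"]) simp
qed

lemma gal_emb_eq:
  assumes F: "F \<in> carrier_mat n n" and F': "F' \<in> carrier_mat n n" "F' * F = 1\<^sub>m n" "F * F' = 1\<^sub>m n"
  shows "gal_emb n F g = F' * map_mat g F"
  unfolding gal_emb_def
proof (rule the_equality)
  have "F * (F' * map_mat g F) = (F * F') * map_mat g F"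
    using F F' by (simp add: assoc_mult_mat[symmetric])
  with F F' show "F' * map_mat g F \<in> carrier_mat n n \<and> F * (F' * map_mat g F) = map_mat g F" by simp
next
  fix M assume M: "M \<in> carrier_mat n n \<and> F * M = map_mat g F"
  then have "M = (F' * F) * M" using F'(2) by auto
  also have "\<dots> = F' * map_mat g F" using assoc_mult_mat[OF F'(1) F, of M n] M by simp
  finally show "M = F' * map_mat g F" .
qed

lemma ring_inverse_eq: "a * b = 1 \<Longrightarrow> ring_inverse a = b"
  unfolding ring_inverse_def by (rule the_equality) (auto, metis mult.assoc mult.commute mult_1_right)

lemma prod_dvd_one: "(\<And>x. x \<in> S \<Longrightarrow> f x dvd 1) \<Longrightarrow> prod f S dvd (1 :: 'a::comm_monoid_mult)"
  by (induction S rule: infinite_finite_induct) (auto dest: mult_dvd_mono)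

lemma coord_eval_eq_0_iff:
  assumes act: "\<And>\<tau>. \<tau> \<in> Sig1 t \<Longrightarrow> ring_aut (act \<tau>)" and M: "det M dvd 1"
  shows "coord_eval t act e M = 0 \<longleftrightarrow> peval (fst e) (\<lambda>(ij, \<tau>). act \<tau> (M $$ ij)) = 0"
proof -
  have "act \<tau> (det M) dvd 1" if "\<tau> \<in> Sig1 t" for \<tau>
  proof -
    interpret comm_ring_hom "act \<tau>" using act[OF that] by (rule ring_aut_comm_ring_hom)
    show ?thesis using M by simp
  qed
  then have "(\<Prod>\<tau>\<in>Sig1 t. act \<tau> (det M)) dvd 1" by (rule prod_dvd_one)
  then obtain v where v: "1 = (\<Prod>\<tau>\<in>Sig1 t. act \<tau> (det M)) * v" by (rule dvdE)
  define X where "X = peval (fst e) (\<lambda>(ij, \<tau>). act \<tau> (M $$ ij))"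
  have "coord_eval t act e M = X * v ^ snd e"
    unfolding coord_eval_def X_def using ring_inverse_eq[OF v[symmetric]] by simp
  moreover have "X = X * v ^ snd e * (\<Prod>\<tau>\<in>Sig1 t. act \<tau> (det M)) ^ snd e"
    by (simp add: mult.assoc flip: power_mult_distrib v[unfolded mult.commute[of _ v]])
  ultimately show ?thesis unfolding X_def by (metis mult_zero_left)
qed

locale picard_vessiot =
  fixes t :: "nat list" and sig :: "'a::comm_ring_1 \<Rightarrow> 'a" and act :: "nat list \<Rightarrow> 'a \<Rightarrow> 'a"
    and K :: "'a set" and n :: nat and A F :: "'a mat"
  assumes sigma_action: "sigma_action t sig act"
    and A: "GL_in K n A"
    and PV: "PV_pseudofield t sig act K n A F"
begin

abbreviation "Aut \<equiv> aut_group t sig act K"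

lemma act_ring_aut: "\<tau> \<in> Sig1 t \<Longrightarrow> ring_aut (act \<tau>)"
  using sigma_action unfolding sigma_action_def by blast

lemma sig_ring_aut: "ring_aut sig"
  using sigma_action unfolding sigma_action_def by blast

lemma F_carrier: "F \<in> carrier_mat n n"
  using PV unfolding PV_pseudofield_def GL_in_def by blast

lemma sig_F: "map_mat sig F = A * F"
  using PV unfolding PV_pseudofield_def by blast

lemma constant_in_K: "sig a = a \<Longrightarrow> a \<in> K"
  using PV unfolding PV_pseudofield_def const_ring_def by blast

definition F_inv :: "'a mat" where
  "F_inv = (SOME F'. F' \<in> carrier_mat n n \<and> F' * F = 1\<^sub>m n \<and> F * F' = 1\<^sub>m n)"

lemma F_inv: "F_inv \<in> carrier_mat n n" "F_inv * F = 1\<^sub>m n" "F * F_inv = 1\<^sub>m n"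
proof -
  have "GL_in UNIV n F" using PV unfolding PV_pseudofield_def by blast
  from someI_ex[OF GL_in_invertible[OF this]]
  show "F_inv \<in> carrier_mat n n" "F_inv * F = 1\<^sub>m n" "F * F_inv = 1\<^sub>m n"
    unfolding F_inv_def by blast+
qed

lemma gal_emb_conv: "gal_emb n F g = F_inv * map_mat g F"
  using gal_emb_eq[OF F_carrier F_inv] .

lemma gal_emb_carrier: "gal_emb n F g \<in> carrier_mat n n"
  using F_inv(1) F_carrier by (simp add: gal_emb_conv)

lemma F_mult_gal_emb: "F * gal_emb n F g = map_mat g F"
  using F_inv F_carrier by (simp add: gal_emb_conv assoc_mult_mat[symmetric])

lemma gal_emb_constant:
  assumes g: "g \<in> Aut"
  shows "map_mat sig (gal_emb n F g) = gal_emb n F g"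
proof -
  interpret sig: comm_ring_hom sig using sig_ring_aut by (rule ring_aut_comm_ring_hom)
  interpret g: comm_ring_hom g using g unfolding aut_group_def by (blast intro: ring_aut_comm_ring_hom)
  obtain A' where A': "A' \<in> carrier_mat n n" "A' * A = 1\<^sub>m n"
    using GL_in_invertible[OF A] by blast
  have A_carrier: "A \<in> carrier_mat n n" using A unfolding GL_in_def by blast
  let ?M = "gal_emb n F g"
  have "map_mat g A = A"
    using A g A_carrier unfolding GL_in_def aut_group_def by (auto intro!: eq_matI)
  moreover have "map_mat sig (map_mat g F) = map_mat g (map_mat sig F)"
    using g unfolding aut_group_def by (auto intro!: eq_matI simp: fun_eq_iff)
  ultimately have "map_mat sig (F * ?M) = A * (F * ?M)"
    using A_carrier F_carrier by (simp add: F_mult_gal_emb sig_F g.mat_hom_mult)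
  moreover have "map_mat sig (F * ?M) = A * (F * map_mat sig ?M)"
    using sig.mat_hom_mult[OF F_carrier gal_emb_carrier] A_carrier F_carrier gal_emb_carrier
    by (simp add: sig_F assoc_mult_mat[of A n n F n "map_mat sig ?M" n])
  ultimately have "A * (F * map_mat sig ?M) = A * (F * ?M)" by simp
  then have "F * map_mat sig ?M = F * ?M"
    by (rule mult_left_cancel_mat[OF A' A_carrier, rotated 2])
       (use F_carrier gal_emb_carrier in auto)
  then show ?thesis
    by (rule mult_left_cancel_mat[OF F_inv(1,2) F_carrier, rotated 2]) (use gal_emb_carrier in auto)
qed

lemma gal_emb_in_K:
  assumes "g \<in> Aut" "i < n" "j < n"
  shows "gal_emb n F g $$ (i, j) \<in> K"
proof (rule constant_in_K)
  have "map_mat sig (gal_emb n F g) $$ (i, j) = gal_emb n F g $$ (i, j)"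
    using gal_emb_constant[OF assms(1)] by simp
  then show "sig (gal_emb n F g $$ (i, j)) = gal_emb n F g $$ (i, j)"
    using gal_emb_carrier[of g] assms(2,3) by simp
qed

lemma gal_emb_comp:
  assumes g: "g \<in> Aut" and h: "h \<in> Aut"
  shows "gal_emb n F (g \<circ> h) = gal_emb n F g * gal_emb n F h"
proof -
  interpret g: comm_ring_hom g using g unfolding aut_group_def by (blast intro: ring_aut_comm_ring_hom)
  have "map_mat g (gal_emb n F h) = gal_emb n F h"
    using gal_emb_in_K[OF h] g gal_emb_carrier[of h] unfolding aut_group_def by (auto intro!: eq_matI)
  moreover have "map_mat (g \<circ> h) F = map_mat g (map_mat h F)" by (rule eq_matI) auto
  ultimately have "map_mat (g \<circ> h) F = map_mat g F * gal_emb n F h"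
    using g.mat_hom_mult[OF F_carrier gal_emb_carrier, of h] F_mult_gal_emb[of h] by simp
  then show ?thesis
    unfolding gal_emb_conv[of "g \<circ> h"] gal_emb_conv[of g]
    using assoc_mult_mat[of F_inv n n "map_mat g F" n "gal_emb n F h" n] F_inv(1) F_carrier
      gal_emb_carrier[of h] by simp
qed

lemma gal_emb_id: "gal_emb n F id = 1\<^sub>m n"
proof -
  have "map_mat id F = F" by (rule eq_matI) auto
  then show ?thesis using F_inv by (simp add: gal_emb_conv)
qed

lemma gal_emb_inv:
  assumes "g \<in> Aut"
  shows "gal_emb n F g * gal_emb n F (inv_into UNIV g) = 1\<^sub>m n"
    and "gal_emb n F (inv_into UNIV g) * gal_emb n F g = 1\<^sub>m n"
proof -
  have "bij g" using assms unfolding aut_group_def ring_aut_def by blast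
  then have "g \<circ> inv_into UNIV g = id" and "inv_into UNIV g \<circ> g = id"
    by (simp_all add: fun_eq_iff bij_is_surj surj_f_inv_f bij_is_inj)
  then show "gal_emb n F g * gal_emb n F (inv_into UNIV g) = 1\<^sub>m n"
    and "gal_emb n F (inv_into UNIV g) * gal_emb n F g = 1\<^sub>m n"
    using gal_emb_comp[OF assms aut_group_inv[OF assms]] gal_emb_comp[OF aut_group_inv[OF assms] assms]
      gal_emb_id by simp_all
qed

lemma det_gal_emb_dvd_one: "g \<in> Aut \<Longrightarrow> det (gal_emb n F g) dvd 1"
  using det_mult[OF gal_emb_carrier gal_emb_carrier] gal_emb_inv(1)
  by (metis det_one dvdI)

lemma aut_lincomb_gal_emb:
  assumes "i < n" "j < n" "\<tau> \<in> Sig1 t"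
  shows "aut_lincomb Aut (\<lambda>g. act \<tau> (gal_emb n F g $$ (i, j)))"
proof (rule aut_lincomb_cong)
  interpret \<tau>: comm_ring_hom "act \<tau>" using act_ring_aut[OF assms(3)] by (rule ring_aut_comm_ring_hom)
  fix g assume g: "g \<in> Aut"
  have "act \<tau> (gal_emb n F g $$ (i, j)) = act \<tau> (\<Sum>l<n. F_inv $$ (i, l) * g (F $$ (l, j)))"
    using assms F_inv(1) F_carrier by (simp add: gal_emb_conv scalar_prod_def lessThan_atLeast0)
  also have "\<dots> = (\<Sum>l<n. act \<tau> (F_inv $$ (i, l)) * g (act \<tau> (F $$ (l, j))))"
    using g assms(3) unfolding aut_group_def by (simp add: \<tau>.hom_sum \<tau>.hom_mult fun_eq_iff)
  finally show "act \<tau> (gal_emb n F g $$ (i, j)) = \<dots>" .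
next
  show "aut_lincomb Aut (\<lambda>g. \<Sum>l<n. act \<tau> (F_inv $$ (i, l)) * g (act \<tau> (F $$ (l, j))))"
    by (intro aut_lincomb_sum aut_lincomb_mult aut_lincomb_const aut_lincomb_apply)
       (auto simp: aut_group_def)
qed

lemma aut_lincomb_peval_gal_emb:
  assumes "p \<in> spoly_ring t C ({..<n} \<times> {..<n})"
  shows "aut_lincomb Aut (\<lambda>g. peval p (\<lambda>(ij, \<tau>). act \<tau> (gal_emb n F g $$ ij)))"
proof (rule aut_lincomb_peval)
  show "ring_aut g" if "g \<in> Aut" for g using that unfolding aut_group_def by blast
  fix m x assume "m \<in> Poly_Mapping.keys p" "x \<in> Poly_Mapping.keys m"
  with assms have x: "fst x \<in> {..<n} \<times> {..<n}" "snd x \<in> Sig1 t"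
    unfolding spoly_ring_def by blast+
  obtain i j where "fst x = (i, j)" by fastforce
  with x show "aut_lincomb Aut (\<lambda>g. case x of (ij, \<tau>) \<Rightarrow> act \<tau> (gal_emb n F g $$ ij))"
    using aut_lincomb_gal_emb by (simp add: case_prod_beta)
qed

lemma gal_emb_preimage_group:
  assumes H: "closed_subgroup t act C n H (galois_group t sig act K n F)"
  defines "\<Gamma> \<equiv> {g \<in> Aut. gal_emb n F g \<in> H}"
  shows "id \<in> \<Gamma>" and "\<And>g h. g \<in> \<Gamma> \<Longrightarrow> h \<in> \<Gamma> \<Longrightarrow> g \<circ> h \<in> \<Gamma>"
    and "\<And>g. g \<in> \<Gamma> \<Longrightarrow> inv_into UNIV g \<in> \<Gamma>"
proof -
  from H have H_one: "1\<^sub>m n \<in> H" and H_mult: "\<And>M N. M \<in> H \<Longrightarrow> N \<in> H \<Longrightarrow> M * N \<in> H"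
    and H_inv: "\<And>M. M \<in> H \<Longrightarrow> \<exists>N\<in>H. M * N = 1\<^sub>m n" and H_sub: "H \<subseteq> galois_group t sig act K n F"
    unfolding closed_subgroup_def by blast+
  show "id \<in> \<Gamma>" using H_one id_in_aut_group gal_emb_id unfolding \<Gamma>_def by simp
  show "g \<circ> h \<in> \<Gamma>" if "g \<in> \<Gamma>" "h \<in> \<Gamma>" for g h
    using that H_mult[of "gal_emb n F g" "gal_emb n F h"] aut_group_comp[of g t sig act K h] gal_emb_comp[of g h]
    unfolding \<Gamma>_def by simp
  fix g assume "g \<in> \<Gamma>"
  then have g: "g \<in> Aut" "gal_emb n F g \<in> H" unfolding \<Gamma>_def by simp_all
  then obtain Y where Y: "Y \<in> H" "gal_emb n F g * Y = 1\<^sub>m n" using H_inv by blast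
  obtain g' where "Y = gal_emb n F g'" using Y(1) H_sub unfolding galois_group_def by blast
  then have "Y \<in> carrier_mat n n" using gal_emb_carrier by simp
  moreover have "gal_emb n F g * Y = gal_emb n F g * gal_emb n F (inv_into UNIV g)"
    using Y(2) gal_emb_inv(1)[OF g(1)] by simp
  ultimately have "Y = gal_emb n F (inv_into UNIV g)"
    using mult_left_cancel_mat[OF gal_emb_carrier gal_emb_inv(2)[OF g(1)] gal_emb_carrier] gal_emb_carrier
    by blast
  then show "inv_into UNIV g \<in> \<Gamma>" using g(1) Y(1) aut_group_inv unfolding \<Gamma>_def by simp
qed

lemma closed_subgroup_eq_galois_group:
  assumes H: "closed_subgroup t act (const_ring sig K) n H (galois_group t sig act K n F)"
    and H_fixed: "fixed_ring t sig act K n F H = K"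
  shows "H = galois_group t sig act K n F"
proof
  show "H \<subseteq> galois_group t sig act K n F" using H unfolding closed_subgroup_def by blast
  obtain E where E: "E \<subseteq> coord_ring t (const_ring sig K) n"
    and H_eq: "H = {M \<in> galois_group t sig act K n F. \<forall>e\<in>E. coord_eval t act e M = 0}"
    using H unfolding closed_subgroup_def by blast
  define \<Gamma> where "\<Gamma> = {g \<in> Aut. gal_emb n F g \<in> H}"
  note \<Gamma> = gal_emb_preimage_group[OF H, folded \<Gamma>_def]
  have \<Gamma>_aut: "ring_aut g" if "g \<in> \<Gamma>" for g using that unfolding \<Gamma>_def aut_group_def by blast
  have \<Gamma>_fixed: "(\<forall>g\<in>\<Gamma>. g a = a) \<longleftrightarrow> a \<in> K" for a
    using H_fixed unfolding fixed_ring_def \<Gamma>_def by blast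
  have flat: "abs_flat (UNIV :: 'a set)" and noeth: "noetherian (UNIV :: 'a set)"
    using PV unfolding PV_pseudofield_def sigma_pseudofield_def by blast+
  show "galois_group t sig act K n F \<subseteq> H"
  proof
    fix M assume M: "M \<in> galois_group t sig act K n F"
    then obtain g where g: "g \<in> Aut" and M_eq: "M = gal_emb n F g" unfolding galois_group_def by blast
    have "coord_eval t act e M = 0" if e: "e \<in> E" for e
    proof -
      let ?val = "\<lambda>h. peval (fst e) (\<lambda>(ij, \<tau>). act \<tau> (gal_emb n F h $$ ij))"
      have zero_iff: "coord_eval t act e (gal_emb n F h) = 0 \<longleftrightarrow> ?val h = 0" if "h \<in> Aut" for h
        using coord_eval_eq_0_iff[OF act_ring_aut det_gal_emb_dvd_one[OF that]] .
      have "fst e \<in> spoly_ring t (const_ring sig K) ({..<n} \<times> {..<n})"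
        using E e unfolding coord_ring_def by auto
      then obtain xs where xs: "\<forall>h\<in>Aut. ?val h = lincomb_eval h xs"
        using aut_lincomb_peval_gal_emb unfolding aut_lincomb_def by blast
      have "\<forall>h\<in>\<Gamma>. lincomb_eval h xs = 0"
        using xs zero_iff e H_eq unfolding \<Gamma>_def by auto
      then have "lincomb_eval g xs = 0"
        using g lincomb_eval_vanishes[OF flat noeth \<Gamma>_aut \<Gamma>(1) \<Gamma>(2) \<Gamma>(3) \<Gamma>_fixed]
        unfolding aut_group_def by (blast intro: ring_aut_comm_ring_hom)
      then show ?thesis using zero_iff[OF g] xs g M_eq by simp
    qed
    with M show "M \<in> H" using H_eq by blast
  qed
qed

end

theorem proposition18:
  fixes t :: "nat list" and sig :: "'a::comm_ring_1 \<Rightarrow> 'a" and act :: "nat list \<Rightarrow> 'a \<Rightarrow> 'a"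
    and K :: "'a set" and n :: nat and A F :: "'a mat" and H :: "'a mat set"
  assumes "\<forall>i<length t. 2 \<le> t ! i"
    and "sigma_action t sig act"
    and "sigma_pseudofield t sig act K" and "noetherian K"
    and "sigma1_closed t act (const_ring sig K)"
    and "GL_in K n A"
    and "PV_pseudofield t sig act K n A F"
    and "closed_subgroup t act (const_ring sig K) n H (galois_group t sig act K n F)"
    and "fixed_ring t sig act K n F H = K"
  shows "H = galois_group t sig act K n F"
proof -
  interpret picard_vessiot t sig act K n A F
    using assms(2,6,7) by unfold_locales
  show ?thesis using closed_subgroup_eq_galois_group assms(8,9) .
qed

end
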